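(* For all integers $n\geq0$, \[ \sum_{j=0}^n4^{n-j}C_jH_{n-j}=2^{2n+1}H_{n+1}-\binom{2(n+1)}{n+1}O_{n+1}. \]
   Context: $H_n=\sum_{j=1}^n\frac1j$ ($H_0=0$), $O_n=\sum_{j=1}^n\frac1{2j-1}$ ($O_0=0$), and $C_n=\frac1{n+1}\binom{2n}{n}$ is the $n$th Catalan number. *)

theory Defs
  imports Complex_Main
begin

definition Harm :: "nat \<Rightarrow> real" where
  "Harm n = (\<Sum>j=1..n. 1 / real j)"

definition Odd_harm :: "nat \<Rightarrow> real" where
  "Odd_harm n = (\<Sum>j=1..n. 1 / (2 * real j - 1))"

definition catalan :: "nat \<Rightarrow> real" where
  "catalan n = real ((2*n) choose n) / real (n + 1)"

end

(*
  Write B(j) = (2j choose j). Expanding H(n-j) = sum_{i=1}^{n-j} 1/i and exchanging the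
  summations turns the left side into sum_{i=1}^n (1/i) sum_{j=0}^{n-i} 4^(n-j) C(j).
  Since C(j) = 2 B(j) - B(j+1)/2, the inner sums telescope to 2*4^n - 4^i B(n+1-i)/2.
  What remains is sum_{k=1}^m 4^k B(m-k)/k = 2 B(m) O(m), which follows by induction
  on m from the recurrence (m+1) B(m+1) = 2(2m+1) B(m).
*)
theory Submission
  imports Defs
begin

definition central_binomial :: "nat \<Rightarrow> nat" where
  "central_binomial n = (2*n) choose n"

lemma Suc_times_central_binomial:
  "Suc n * central_binomial (Suc n) = 2 * (2*n + 1) * central_binomial n"
proof -
  define X where "X = Suc (2*n) choose n"
  have X_up: "Suc n * central_binomial (Suc n) = 2 * Suc n * X"
    using Suc_times_binomial[of n "Suc (2*n)"] by (simp add: central_binomial_def X_def)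
  have X_down: "Suc n * X = Suc (2*n) * central_binomial n"
    using Suc_times_binomial[of n "2*n"] binomial_symmetric[of n "Suc (2*n)"]
    by (simp add: central_binomial_def X_def)
  have "Suc n * (Suc n * central_binomial (Suc n)) = 2 * Suc n * (Suc n * X)"
    by (metis X_up mult.assoc mult.left_commute)
  also have "\<dots> = Suc n * (2 * (2*n + 1) * central_binomial n)"
    by (metis X_down Suc_eq_plus1 mult.assoc mult.left_commute)
  finally show ?thesis
    by (simp only: mult_cancel1) simp
qed

lemma real_Suc_times_central_binomial:
  "real (Suc n) * real (central_binomial (Suc n)) = (4 * real n + 2) * real (central_binomial n)"
  using arg_cong[OF Suc_times_central_binomial[of n], of real] by (simp add: algebra_simps)

lemma catalan_eq_central_binomial_diff:
  "catalan n = 2 * real (central_binomial n) - real (central_binomial (Suc n)) / 2"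
proof -
  have "real (central_binomial (Suc n)) = (4 * real n + 2) * real (central_binomial n) / real (Suc n)"
    using real_Suc_times_central_binomial[of n] by (simp add: field_simps)
  then show ?thesis
    by (simp add: catalan_def central_binomial_def field_simps)
qed

lemma sum_power4_catalan:
  "(\<Sum>j=0..m. 4^(m-j) * catalan j) = 2 * 4^m - real (central_binomial (Suc m)) / 2"
proof (induction m)
  case 0
  then show ?case by (simp add: catalan_def central_binomial_def)
next
  case (Suc m)
  have "(\<Sum>j=0..Suc m. 4^(Suc m-j) * catalan j) = 4 * (\<Sum>j=0..m. 4^(m-j) * catalan j) + catalan (Suc m)"
    by (simp add: sum_distrib_left Suc_diff_le mult.assoc)
  then show ?case
    by (simp add: Suc.IH catalan_eq_central_binomial_diff[of "Suc m"])
qed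

lemma sum_power4_catalan_tail:
  assumes "i \<in> {1..n}"
  shows "(\<Sum>j=0..n-i. 4^(n-j) * catalan j) = 2 * 4^n - 4^i * real (central_binomial (Suc n - i)) / 2"
proof -
  have "(\<Sum>j=0..n-i. 4^(n-j) * catalan j) = 4^i * (\<Sum>j=0..n-i. 4^(n-i-j) * catalan j)"
    unfolding sum_distrib_left using assms
    by (intro sum.cong) (auto simp flip: power_add)
  also have "\<dots> = 4^i * (2 * 4^(n-i) - real (central_binomial (Suc (n-i))) / 2)"
    by (simp only: sum_power4_catalan)
  finally show ?thesis
    using assms by (simp add: right_diff_distrib Suc_diff_le mult.left_commute flip: power_add)
qed

lemma sum_power4_central_binomial_div_Suc:
  "real (Suc m) * (\<Sum>k=1..Suc m. 4^k * real (central_binomial (Suc m - k)) / real k)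
     = 4 * real (central_binomial m)
       + (4 * real m + 2) * (\<Sum>k=1..m. 4^k * real (central_binomial (m - k)) / real k)"
    (is "_ * ?V (Suc m) = _ + _ * ?V m")
proof -
  define f where "f k = 4^k * real (central_binomial (Suc m - k))" for k
  \<comment> \<open>Split (m+1)/k = 1 + (m+1-k)/k and apply the recurrence to the second part.\<close>
  have split_term: "real (Suc m) * (4^k * real (central_binomial (Suc m - k)) / real k)
      = f k - f (Suc k) + (4 * real m + 2) * (4^k * real (central_binomial (m - k)) / real k)"
    if "k \<in> {1..m}" for k
  proof -
    from that have k: "1 \<le> k" "k \<le> m" by auto
    have "real (Suc m) * real (central_binomial (Suc m - k))
        = real k * real (central_binomial (Suc m - k))
          + (4 * real m + 2 - 4 * real k) * real (central_binomial (m - k))"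
      using real_Suc_times_central_binomial[of "m - k"] k
      by (simp add: Suc_diff_le of_nat_diff algebra_simps)
    then have "real (Suc m) * (4^k * real (central_binomial (Suc m - k)) / real k)
        = 4^k / real k * (real k * real (central_binomial (Suc m - k))
          + (4 * real m + 2 - 4 * real k) * real (central_binomial (m - k)))"
      by simp
    also have "\<dots> = f k - f (Suc k) + (4 * real m + 2) * (4^k * real (central_binomial (m - k)) / real k)"
      using k by (simp add: f_def Suc_diff_le field_simps)
    finally show ?thesis .
  qed
  have "real (Suc m) * ?V (Suc m)
      = (\<Sum>k=1..m. real (Suc m) * (4^k * real (central_binomial (Suc m - k)) / real k)) + 4^Suc m"
    by (simp add: sum_distrib_left distrib_left central_binomial_def)
  also have "(\<Sum>k=1..m. real (Suc m) * (4^k * real (central_binomial (Suc m - k)) / real k))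
      = (\<Sum>k=1..m. f k - f (Suc k) + (4 * real m + 2) * (4^k * real (central_binomial (m - k)) / real k))"
    by (rule sum.cong[OF refl split_term])
  also have "\<dots> = (\<Sum>k=1..m. f k - f (Suc k)) + (4 * real m + 2) * ?V m"
    by (simp only: sum.distrib sum_distrib_left)
  also have "(\<Sum>k=1..m. f k - f (Suc k)) = f 1 - f (Suc m)"
    using sum_Suc_diff[of 1 m "\<lambda>k. - f k"] by simp
  finally show ?thesis
    by (simp add: f_def central_binomial_def)
qed

lemma sum_power4_central_binomial_div:
  "(\<Sum>k=1..m. 4^k * real (central_binomial (m - k)) / real k)
     = 2 * real (central_binomial m) * Odd_harm m"
proof (induction m)
  case 0
  then show ?case by (simp add: Odd_harm_def)
next
  case (Suc m)
  have "real (Suc m) * (2 * real (central_binomial (Suc m)) * Odd_harm (Suc m))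
      = 2 * ((4 * real m + 2) * real (central_binomial m)) * (Odd_harm m + 1 / (2 * real m + 1))"
    by (simp add: Odd_harm_def flip: real_Suc_times_central_binomial)
  also have "\<dots> = 4 * real (central_binomial m)
      + (4 * real m + 2) * (2 * real (central_binomial m) * Odd_harm m)"
    by (simp add: field_simps)
  finally have "real (Suc m) * (\<Sum>k=1..Suc m. 4^k * real (central_binomial (Suc m - k)) / real k)
      = real (Suc m) * (2 * real (central_binomial (Suc m)) * Odd_harm (Suc m))"
    by (simp only: sum_power4_central_binomial_div_Suc Suc.IH)
  then show ?case
    by (simp only: mult_cancel_left of_nat_eq_0_iff) simp
qed

lemma sum_triangle_swap:
  fixes g :: "nat \<Rightarrow> nat \<Rightarrow> 'a::comm_monoid_add"
  shows "(\<Sum>j=0..n. \<Sum>i=1..n-j. g j i) = (\<Sum>i=1..n. \<Sum>j=0..n-i. g j i)"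
  unfolding sum.Sigma[OF finite_atLeastAtMost ballI[OF finite_atLeastAtMost]]
  by (rule sum.reindex_bij_witness[where i=prod.swap and j=prod.swap]) auto

lemma sum_mult_Harm_diff:
  fixes a :: "nat \<Rightarrow> real"
  shows "(\<Sum>j=0..n. a j * Harm (n - j)) = (\<Sum>i=1..n. (\<Sum>j=0..n-i. a j) / real i)"
proof -
  have "(\<Sum>j=0..n. a j * Harm (n - j)) = (\<Sum>j=0..n. \<Sum>i=1..n-j. a j / real i)"
    by (simp add: Harm_def sum_distrib_left)
  also have "\<dots> = (\<Sum>i=1..n. \<Sum>j=0..n-i. a j / real i)"
    by (rule sum_triangle_swap)
  finally show ?thesis
    by (simp add: sum_divide_distrib)
qed

theorem corollary2:
  fixes n :: nat
  shows "(\<Sum>j=0..n. 4 ^ (n - j) * catalan j * Harm (n - j))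
         = 2 ^ (2*n + 1) * Harm (n + 1) - real ((2*(n+1)) choose (n+1)) * Odd_harm (n + 1)"
proof -
  have "(\<Sum>j=0..n. 4 ^ (n - j) * catalan j * Harm (n - j))
      = (\<Sum>i=1..n. (2 * 4^n - 4^i * real (central_binomial (Suc n - i)) / 2) / real i)"
    by (simp add: sum_mult_Harm_diff sum_power4_catalan_tail)
  also have "\<dots> = 2 * 4^n * Harm n - (\<Sum>i=1..n. 4^i * real (central_binomial (Suc n - i)) / real i) / 2"
    by (simp add: Harm_def diff_divide_distrib sum_subtractf sum_distrib_left sum_divide_distrib mult.commute)
  also have "(\<Sum>i=1..n. 4^i * real (central_binomial (Suc n - i)) / real i)
      = 2 * real (central_binomial (Suc n)) * Odd_harm (Suc n) - 4^Suc n / real (Suc n)"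
    using sum_power4_central_binomial_div[of "Suc n"] by (simp add: central_binomial_def)
  also have "Harm n = Harm (n + 1) - 1 / real (Suc n)"
    by (simp add: Harm_def)
  also have "2 * 4^n * (Harm (n + 1) - 1 / real (Suc n))
      - (2 * real (central_binomial (Suc n)) * Odd_harm (Suc n) - 4^Suc n / real (Suc n)) / 2
      = 2 * 4^n * Harm (n + 1) - real (central_binomial (n + 1)) * Odd_harm (n + 1)"
    by (simp add: field_simps del: of_nat_Suc)
  finally have "(\<Sum>j=0..n. 4 ^ (n - j) * catalan j * Harm (n - j))
      = 2 * 4^n * Harm (n + 1) - real (central_binomial (n + 1)) * Odd_harm (n + 1)" .
  then show ?thesis
    by (simp add: power_mult central_binomial_def)
qed

end
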